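(* Consider the one-term Kronecker product model below under the deterministic scheme, along a sequence of models with $M+N\to\infty$. Suppose that (Assumption 1) $\frac{m_0+n_0}{\ln\ln(MN)}\to\infty$ and $\frac{m_0^\dagger+n_0^\dagger}{\ln\ln(MN)}\to\infty$, where $m_0^\dagger=M-m_0$, $n_0^\dagger=N-n_0$, and that (Assumption 2) $\bm E$ has i.i.d. standard normal entries. Let $\hat\lambda,\hat{\bm A},\hat{\bm B}$ be the estimators computed under the true configuration $(m_0,n_0)$ (with the sign of the leading singular pair chosen so that $\langle \mathrm{vec}(\hat{\bm A}),\mathrm{vec}(\bm A)\rangle\ge 0$). Then $$\frac{\hat\lambda-\lambda}{\lambda}=O_p\Big(\frac{r_0}{\lambda/\sigma}\Big),\qquad \|\hat{\bm A}-\bm A\|_F^2=O_p\Big(\frac{r_0}{\lambda/\sigma}\Big),\qquad \|\hat{\bm B}-\bm B\|_F^2=O_p\Big(\frac{r_0}{\lambda/\sigma}\Big),$$ where $r_0=2^{-(m_0+n_0)/2}+2^{-(m_0^\dagger+n_0^\dagger)/2}$.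
   Context: Model: $M,N$ are nonnegative integers and the observed $2^M\times 2^N$ matrix is $\bm Y=\lambda\bm A\otimes\bm B+\sigma 2^{-(M+N)/2}\bm E$, where $\lambda>0$, $\sigma>0$, $\bm A$ is $2^{m_0}\times 2^{n_0}$, $\bm B$ is $2^{M-m_0}\times 2^{N-n_0}$, $\|\bm A\|_F=\|\bm B\|_F=1$, and $\bm E$ is a $2^M\times 2^N$ noise matrix. The pair $(m_0,n_0)$ is the true configuration. Deterministic scheme: $\lambda,\bm A,\bm B$ are non-random. All quantities ($M,N,m_0,n_0,\lambda,\sigma,\bm A,\bm B$) may depend on the index of the sequence; $O_p$ is with respect to this sequence. Vectorization: for a $p\times q$ matrix $\bm C=(c_{ij})$, $\mathrm{vec}(\bm C)=(c_{11},\dots,c_{1q},\dots,c_{p1},\dots,c_{pq})'$ (rows stacked); $\mathrm{vec}^{-1}$ is its inverse for the appropriate dimensions. Rearrangement: for a $2^a\times 2^b$ matrix $\bm C$ and integers $0\le m\le a$, $0\le n\le b$, view $\bm C$ as a $2^m\times 2^n$ array of blocks $\bm C_{i,j}$ of size $2^{a-m}\times 2^{b-n}$; $\mathcal R_{m,n}[\bm C]$ is the $2^{m+n}\times 2^{a+b-m-n}$ matrix whose rows are, in order, $\mathrm{vec}(\bm C_{1,1})',\dots,\mathrm{vec}(\bm C_{1,2^n})',\dots,\mathrm{vec}(\bm C_{2^m,1})',\dots,\mathrm{vec}(\bm C_{2^m,2^n})'$. It satisfies $\mathcal R_{m,n}[\bm A\otimes\bm B]=\mathrm{vec}(\bm A)\mathrm{vec}(\bm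 B)'$ when $\bm A$ is $2^m\times 2^n$. Estimators under configuration $(m,n)$: let $u_1,v_1$ be the leading left/right singular vectors of $\mathcal R_{m,n}[\bm Y]$; $\hat\lambda=\|\mathcal R_{m,n}[\bm Y]\|_S$ (largest singular value), $\hat{\bm A}=\mathrm{vec}^{-1}(u_1)$ ($2^m\times 2^n$), $\hat{\bm B}=\mathrm{vec}^{-1}(v_1)$ ($2^{M-m}\times 2^{N-n}$). *)

theory Defs
  imports "HOL-Probability.Probability"
begin

text \<open>Matrices of varying (power-of-two) size are represented as functions
  nat => nat => real, with 0-based row/column indices; only entries inside the
  stated dimensions are meaningful.\<close>

type_synonym rmat = "nat \<Rightarrow> nat \<Rightarrow> real"
type_synonym rvec = "nat \<Rightarrow> real"

definition frob :: "nat \<Rightarrow> nat \<Rightarrow> rmat \<Rightarrow> real" where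
  "frob p q C = sqrt (\<Sum>i<p. \<Sum>j<q. (C i j)\<^sup>2)"

definition vnorm :: "nat \<Rightarrow> rvec \<Rightarrow> real" where
  "vnorm p x = sqrt (\<Sum>i<p. (x i)\<^sup>2)"

definition vinner :: "nat \<Rightarrow> rvec \<Rightarrow> rvec \<Rightarrow> real" where
  "vinner p x y = (\<Sum>i<p. x i * y i)"

definition kron :: "nat \<Rightarrow> nat \<Rightarrow> rmat \<Rightarrow> rmat \<Rightarrow> rmat" where
  "kron r s A B = (\<lambda>i j. A (i div r) (j div s) * B (i mod r) (j mod s))"

text \<open>Row-stacking vectorisation of a matrix with q columns, and its inverse.\<close>
definition vec :: "nat \<Rightarrow> rmat \<Rightarrow> rvec" where
  "vec q C = (\<lambda>k. C (k div q) (k mod q))"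

definition unvec :: "nat \<Rightarrow> rvec \<Rightarrow> rmat" where
  "unvec q x = (\<lambda>i j. x (i * q + j))"

text \<open>Rearrangement R_{m,n}[C] of a 2^a x 2^b matrix C: row (i1,j1) (index i1*2^n+j1)
  is vec of the block C_{i1,j1} of size 2^(a-m) x 2^(b-n).\<close>
definition rearr :: "nat \<Rightarrow> nat \<Rightarrow> nat \<Rightarrow> nat \<Rightarrow> rmat \<Rightarrow> rmat" where
  "rearr a b m n C = (\<lambda>r c.
      C ((r div 2^n) * 2^(a-m) + c div 2^(b-n)) ((r mod 2^n) * 2^(b-n) + c mod 2^(b-n)))"

definition mulv :: "nat \<Rightarrow> rmat \<Rightarrow> rvec \<Rightarrow> rvec" where
  "mulv q C x = (\<lambda>i. \<Sum>j<q. C i j * x j)"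

definition tmulv :: "nat \<Rightarrow> rmat \<Rightarrow> rvec \<Rightarrow> rvec" where
  "tmulv p C u = (\<lambda>j. \<Sum>i<p. C i j * u i)"

definition spec_norm :: "nat \<Rightarrow> nat \<Rightarrow> rmat \<Rightarrow> real" where
  "spec_norm p q C = Sup {vnorm p (mulv q C x) | x. vnorm q x = 1}"

definition leading_sv_pair :: "nat \<Rightarrow> nat \<Rightarrow> rmat \<Rightarrow> rvec \<Rightarrow> rvec \<Rightarrow> bool" where
  "leading_sv_pair p q C u v \<longleftrightarrow>
     vnorm p u = 1 \<and> vnorm q v = 1 \<and>
     (\<forall>i<p. mulv q C v i = spec_norm p q C * u i) \<and>
     (\<forall>j<q. tmulv p C u j = spec_norm p q C * v j)"

text \<open>Stochastic boundedness X_k = O_p(a_k) (outer-probability form, so that no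
  measurability of X is needed).\<close>
definition bigOp :: "'a measure \<Rightarrow> (nat \<Rightarrow> 'a \<Rightarrow> real) \<Rightarrow> (nat \<Rightarrow> real) \<Rightarrow> bool" where
  "bigOp P X a \<longleftrightarrow> (\<forall>\<epsilon>>0. \<exists>C K. \<forall>k\<ge>K. \<exists>S\<in>sets P.
      measure P S \<ge> 1 - \<epsilon> \<and> (\<forall>\<omega>\<in>S. \<bar>X k \<omega>\<bar> \<le> C * a k))"

end

theory Submission
  imports Defs
begin

text \<open>Under the true configuration the rearrangement turns the model into
  R[Y] = \<lambda> vec(A) vec(B)' + \<sigma> 2^(-(M+N)/2) R[E], and R[E] is again a p \<times> q matrix
  (p = 2^(m0+n0), q = 2^(M+N-m0-n0)) of i.i.d. standard normals. Testing the leading singular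
  pair against (vec A, vec B) bounds the error of the singular value by the operator norm z of
  the noise, and the squared errors of the singular vectors by 8 z / \<lambda>. An \<epsilon>-net with a union
  bound over Gaussian tails gives \<parallel>R[E]\<parallel> \<le> C(\<epsilon>) \<surd>(p + q) with probability 1 - \<epsilon>, where C(\<epsilon>)
  does not depend on the dimensions, and 2^(-(M+N)/2) \<surd>(p + q) \<le> r0. The bound therefore holds
  at every index of the sequence.\<close>

section \<open>Vectors and bilinear forms\<close>

definition bil :: "nat \<Rightarrow> nat \<Rightarrow> rmat \<Rightarrow> rvec \<Rightarrow> rvec \<Rightarrow> real" where
  "bil p q C x w = (\<Sum>r<p. \<Sum>c<q. x r * C r c * w c)"

lemma vnorm_eq_L2_set: "vnorm p x = L2_set x {..<p}"
  by (simp add: vnorm_def L2_set_def)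

lemma vnorm_nonneg: "vnorm p x \<ge> 0"
  by (simp add: vnorm_def sum_nonneg)

lemma vnorm_power2: "(vnorm p x)\<^sup>2 = (\<Sum>i<p. (x i)\<^sup>2)"
  by (simp add: vnorm_def sum_nonneg)

lemma vnorm_scale: "vnorm p (\<lambda>i. a * x i) = \<bar>a\<bar> * vnorm p x"
  by (simp add: vnorm_def power_mult_distrib sum_distrib_left[symmetric] real_sqrt_mult)

lemma vnorm_add_le: "vnorm p (\<lambda>i. x i + y i) \<le> vnorm p x + vnorm p y"
  unfolding vnorm_eq_L2_set by (rule L2_set_triangle_ineq)

lemma vnorm_diff_commute: "vnorm p (\<lambda>i. x i - y i) = vnorm p (\<lambda>i. y i - x i)"
  by (simp add: vnorm_def power2_commute)

lemma abs_le_vnorm: "i < p \<Longrightarrow> \<bar>x i\<bar> \<le> vnorm p x"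
  unfolding vnorm_def by (rule real_le_rsqrt) (auto intro: member_le_sum)

lemma vnorm_eq_0_iff: "vnorm p x = 0 \<longleftrightarrow> (\<forall>i<p. x i = 0)"
  by (auto simp: vnorm_def sum_nonneg_eq_0_iff)

lemma vnorm_unit_vector: "p \<ge> 1 \<Longrightarrow> vnorm p (\<lambda>i. if i = 0 then 1 else 0) = 1"
  by (simp add: vnorm_def power2_eq_square if_distrib[of "\<lambda>a. a * _"] sum.delta cong: if_cong)

lemma vinner_self: "vinner p x x = (vnorm p x)\<^sup>2"
  unfolding vnorm_power2 vinner_def by (simp add: power2_eq_square)

lemma vinner_commute: "vinner p x y = vinner p y x"
  by (simp add: vinner_def mult.commute)

lemma abs_vinner_le: "\<bar>vinner p x y\<bar> \<le> vnorm p x * vnorm p y"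
proof -
  have "\<bar>vinner p x y\<bar> \<le> (\<Sum>i<p. \<bar>x i\<bar> * \<bar>y i\<bar>)"
    unfolding vinner_def abs_mult[symmetric] by (rule sum_abs)
  also have "\<dots> \<le> vnorm p x * vnorm p y"
    unfolding vnorm_eq_L2_set by (rule L2_set_mult_ineq)
  finally show ?thesis .
qed

lemma sum_power2_diff_eq:
  "(\<Sum>i<p. (x i - y i)\<^sup>2) = (vnorm p x)\<^sup>2 - 2 * vinner p x y + (vnorm p y)\<^sup>2"
  by (simp add: vnorm_power2 vinner_def power2_diff sum.distrib sum_subtractf
      sum_distrib_left mult.assoc)

lemma bil_eq_vinner_mulv: "bil p q C x w = vinner p x (mulv q C w)"
  by (simp add: bil_def vinner_def mulv_def sum_distrib_left mult.assoc)

lemma bil_diff_left: "bil p q C (\<lambda>i. x i - y i) w = bil p q C x w - bil p q C y w"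
  by (simp add: bil_def sum_subtractf left_diff_distrib)

lemma bil_diff_right: "bil p q C x (\<lambda>i. w i - z i) = bil p q C x w - bil p q C x z"
  by (simp add: bil_def sum_subtractf right_diff_distrib)

lemma bil_scale_left: "bil p q C (\<lambda>i. a * x i) w = a * bil p q C x w"
  by (simp add: bil_def algebra_simps sum_distrib_left)

lemma bil_scale_right: "bil p q C x (\<lambda>i. a * w i) = a * bil p q C x w"
  by (simp add: bil_def algebra_simps sum_distrib_left)

lemma bil_scale_matrix: "bil p q (\<lambda>r c. t * C r c) x w = t * bil p q C x w"
  by (simp add: bil_def sum_distrib_left mult.assoc mult.left_commute)

lemma bil_eq_0_if_vnorm_eq_0: "vnorm p x * vnorm q w = 0 \<Longrightarrow> bil p q C x w = 0"
  by (auto simp: bil_def vnorm_eq_0_iff intro!: sum.neutral)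

lemma abs_bil_le_sum_abs:
  assumes "vnorm p x \<le> 1" "vnorm q w \<le> 1"
  shows "\<bar>bil p q C x w\<bar> \<le> (\<Sum>r<p. \<Sum>c<q. \<bar>C r c\<bar>)"
  unfolding bil_def
proof (intro order_trans[OF sum_abs] sum_mono order_trans[OF sum_abs])
  fix r c assume "r \<in> {..<p}" "c \<in> {..<q}"
  then have "\<bar>x r\<bar> \<le> 1" "\<bar>w c\<bar> \<le> 1"
    using abs_le_vnorm[of r p x] abs_le_vnorm[of c q w] assms by auto
  then have "\<bar>x r\<bar> * \<bar>C r c\<bar> * \<bar>w c\<bar> \<le> 1 * \<bar>C r c\<bar> * 1"
    by (intro mult_mono) auto
  then show "\<bar>x r * C r c * w c\<bar> \<le> \<bar>C r c\<bar>" by (simp add: abs_mult)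
qed

lemma abs_bil_le_homogeneous:
  assumes unit: "\<And>x w. vnorm p x = 1 \<Longrightarrow> vnorm q w = 1 \<Longrightarrow> \<bar>bil p q G x w\<bar> \<le> \<Gamma>"
  shows "\<bar>bil p q G x w\<bar> \<le> \<Gamma> * vnorm p x * vnorm q w"
proof (cases "vnorm p x * vnorm q w = 0")
  case True
  then show ?thesis by (auto simp: bil_eq_0_if_vnorm_eq_0)
next
  case False
  define a b where "a = vnorm p x" and "b = vnorm q w"
  have pos: "a > 0" "b > 0"
    using False vnorm_nonneg[of p x] vnorm_nonneg[of q w] by (auto simp: a_def b_def less_le)
  have "bil p q G x w = a * b * bil p q G (\<lambda>i. x i / a) (\<lambda>i. w i / b)"
    using pos by (simp add: bil_scale_left[of _ _ _ "1/a", simplified]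
        bil_scale_right[of _ _ _ _ "1/b", simplified])
  moreover have "\<bar>bil p q G (\<lambda>i. x i / a) (\<lambda>i. w i / b)\<bar> \<le> \<Gamma>"
    using pos by (intro unit) (simp_all add: a_def b_def vnorm_scale[of _ "1/_", simplified])
  ultimately show ?thesis
    using pos by (simp add: abs_mult a_def b_def mult_left_mono mult.commute mult.left_commute)
qed

section \<open>Spectral norm and rank-one perturbation\<close>

lemma vnorm_mulv_le_sum_abs:
  assumes "vnorm q x = 1"
  shows "vnorm p (mulv q C x) \<le> (\<Sum>i<p. \<Sum>j<q. \<bar>C i j\<bar>)"
proof -
  have "vnorm p (mulv q C x) \<le> (\<Sum>i<p. \<bar>mulv q C x i\<bar>)"
    unfolding vnorm_eq_L2_set by (rule L2_set_le_sum_abs)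
  also have "\<dots> \<le> (\<Sum>i<p. \<Sum>j<q. \<bar>C i j\<bar>)"
    unfolding mulv_def
  proof (intro sum_mono order_trans[OF sum_abs])
    fix i j assume "j \<in> {..<q}"
    then have "\<bar>x j\<bar> \<le> 1" using abs_le_vnorm[of j q x] assms by auto
    then show "\<bar>C i j * x j\<bar> \<le> \<bar>C i j\<bar>"
      using mult_left_mono[of "\<bar>x j\<bar>" 1 "\<bar>C i j\<bar>"] by (simp add: abs_mult)
  qed
  finally show ?thesis .
qed

lemma vnorm_mulv_le_spec_norm:
  assumes "vnorm q x = 1"
  shows "vnorm p (mulv q C x) \<le> spec_norm p q C"
  unfolding spec_norm_def
proof (rule cSup_upper)
  show "vnorm p (mulv q C x) \<in> {vnorm p (mulv q C x) |x. vnorm q x = 1}"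
    using assms by blast
  show "bdd_above {vnorm p (mulv q C x) |x. vnorm q x = 1}"
    using vnorm_mulv_le_sum_abs by (auto intro!: bdd_aboveI[of _ "\<Sum>i<p. \<Sum>j<q. \<bar>C i j\<bar>"])
qed

lemma bil_le_spec_norm:
  assumes "vnorm p x = 1" "vnorm q w = 1"
  shows "bil p q C x w \<le> spec_norm p q C"
  using abs_vinner_le[of p x "mulv q C w"] vnorm_mulv_le_spec_norm[of q w p C] assms
  by (simp add: bil_eq_vinner_mulv)

lemma leading_sv_pair_bil_eq_spec_norm:
  assumes "leading_sv_pair p q C u v"
  shows "bil p q C u v = spec_norm p q C"
proof -
  have "bil p q C u v = vinner p u (\<lambda>i. spec_norm p q C * u i)"
    using assms unfolding bil_eq_vinner_mulv vinner_def leading_sv_pair_def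
    by (intro sum.cong) auto
  also have "\<dots> = spec_norm p q C * vinner p u u"
    by (simp add: vinner_def sum_distrib_left algebra_simps)
  finally show ?thesis
    using assms by (simp add: leading_sv_pair_def vinner_self)
qed

lemma bil_rank_one_plus:
  assumes "\<forall>r<p. \<forall>c<q. R r c = lam * a r * b c + Z r c"
  shows "bil p q R x w = lam * vinner p x a * vinner q b w + bil p q Z x w"
proof -
  have "bil p q R x w = (\<Sum>r<p. \<Sum>c<q. lam * (x r * a r) * (b c * w c)) + bil p q Z x w"
    using assms by (simp add: bil_def sum.distrib[symmetric] algebra_simps)
  also have "(\<Sum>r<p. \<Sum>c<q. lam * (x r * a r) * (b c * w c))
      = (\<Sum>r<p. lam * (x r * a r)) * (\<Sum>c<q. b c * w c)"
    by (rule sum_product[symmetric])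
  finally show ?thesis
    by (simp add: vinner_def sum_distrib_left)
qed

lemma unit_inner_products_near_one:
  fixes \<alpha> \<beta> t :: real
  assumes "\<bar>\<alpha>\<bar> \<le> 1" "\<bar>\<beta>\<bar> \<le> 1" "\<alpha> \<ge> 0" "t \<ge> 0" "\<alpha> * \<beta> \<ge> 1 - 2 * t"
  shows "2 - 2 * \<alpha> \<le> 8 * t" "2 - 2 * \<beta> \<le> 8 * t"
proof -
  have "\<alpha> * \<beta> \<le> \<alpha>"
    using assms mult_left_mono[of \<beta> 1 \<alpha>] by simp
  then show "2 - 2 * \<alpha> \<le> 8 * t"
    using assms by linarith
  show "2 - 2 * \<beta> \<le> 8 * t"
  proof (cases "\<beta> \<ge> 0")
    case True
    then have "\<alpha> * \<beta> \<le> \<beta>"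
      using assms mult_right_mono[of \<alpha> 1 \<beta>] by simp
    then show ?thesis using assms by linarith
  next
    case False
    then have "\<alpha> * \<beta> \<le> 0"
      using assms by (simp add: mult_nonneg_nonpos)
    then show ?thesis using assms by linarith
  qed
qed

text \<open>Testing the leading singular pair (u, v) and the signal pair (a, b) against the form
  gives \<lambda> - z \<le> s \<le> \<lambda> \<langle>u,a\<rangle> \<langle>b,v\<rangle> + z, hence \<langle>u,a\<rangle> \<langle>b,v\<rangle> \<ge> 1 - 2 z / \<lambda>.\<close>
lemma rank_one_perturbation:
  assumes R: "\<forall>r<p. \<forall>c<q. R r c = lam * a r * b c + Z r c"
    and a: "vnorm p a = 1" and b: "vnorm q b = 1"
    and Z: "\<And>x w. \<bar>bil p q Z x w\<bar> \<le> z * vnorm p x * vnorm q w"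
    and lead: "leading_sv_pair p q R u v"
    and sign: "vinner p u a \<ge> 0"
    and lam: "lam > 0"
  shows "\<bar>spec_norm p q R - lam\<bar> \<le> z"
    and "(\<Sum>i<p. (u i - a i)\<^sup>2) \<le> 8 * z / lam"
    and "(\<Sum>j<q. (v j - b j)\<^sup>2) \<le> 8 * z / lam"
proof -
  define s \<alpha> \<beta> where "s = spec_norm p q R" and "\<alpha> = vinner p u a" and "\<beta> = vinner q b v"
  have u: "vnorm p u = 1" and v: "vnorm q v = 1"
    using lead by (auto simp: leading_sv_pair_def)
  have Zab: "\<bar>bil p q Z a b\<bar> \<le> z" and Zuv: "\<bar>bil p q Z u v\<bar> \<le> z"
    using Z[of a b] Z[of u v] a b u v by simp_all
  have \<alpha>: "\<bar>\<alpha>\<bar> \<le> 1" and \<beta>: "\<bar>\<beta>\<bar> \<le> 1"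
    using abs_vinner_le[of p u a] abs_vinner_le[of q b v] u v a b by (simp_all add: \<alpha>_def \<beta>_def)
  have "\<bar>\<alpha> * \<beta>\<bar> \<le> 1"
    using mult_mono[OF \<alpha> \<beta>] by (simp add: abs_mult)
  have lower: "lam + bil p q Z a b \<le> s"
    using bil_rank_one_plus[OF R, of a b] bil_le_spec_norm[OF a b, of R] a b
    by (simp add: s_def vinner_self)
  have upper: "s = lam * (\<alpha> * \<beta>) + bil p q Z u v"
    using bil_rank_one_plus[OF R, of u v] leading_sv_pair_bil_eq_spec_norm[OF lead]
    by (simp add: s_def \<alpha>_def \<beta>_def mult.assoc)
  have "lam * (\<alpha> * \<beta>) \<le> lam"
    using \<open>\<bar>\<alpha> * \<beta>\<bar> \<le> 1\<close> lam mult_left_mono[of "\<alpha> * \<beta>" 1 lam] by auto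
  then show "\<bar>spec_norm p q R - lam\<bar> \<le> z"
    using lower upper Zab Zuv by (simp add: s_def abs_le_iff)
  have "lam * (\<alpha> * \<beta>) \<ge> lam * (1 - 2 * (z / lam))"
    using lower upper Zab Zuv lam by (simp add: algebra_simps)
  then have \<alpha>\<beta>: "\<alpha> * \<beta> \<ge> 1 - 2 * (z / lam)"
    using lam by simp
  have "z / lam \<ge> 0"
    using Zab lam by simp
  note near = unit_inner_products_near_one[OF \<alpha> \<beta> sign[folded \<alpha>_def] this \<alpha>\<beta>]
  show "(\<Sum>i<p. (u i - a i)\<^sup>2) \<le> 8 * z / lam" "(\<Sum>j<q. (v j - b j)\<^sup>2) \<le> 8 * z / lam"
    using near sum_power2_diff_eq[of u a p] sum_power2_diff_eq[of v b q] u v a b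
    by (simp_all add: \<alpha>_def \<beta>_def vinner_commute)
qed

section \<open>A net of the unit sphere\<close>

text \<open>A 1/4-net of the unit sphere of \<real>^n: the points of the grid of mesh 1/K, K \<approx> 2 \<surd>n,
  that lie in the ball of radius 2. Weighting each grid point w by exp(36 n - |w|^2) \<ge> 1 shows
  that there are at most (4 e^36)^n of them.\<close>

definition net_scale :: "nat \<Rightarrow> int" where
  "net_scale n = \<lceil>2 * sqrt (real n)\<rceil>"

definition net_grid :: "nat \<Rightarrow> (nat \<Rightarrow> int) set" where
  "net_grid n = {w \<in> PiE {..<n} (\<lambda>_. {-2 * net_scale n..2 * net_scale n}).
                   (\<Sum>i<n. (w i)\<^sup>2) \<le> 4 * (net_scale n)\<^sup>2}"

definition net_point :: "nat \<Rightarrow> (nat \<Rightarrow> int) \<Rightarrow> rvec" where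
  "net_point n w = (\<lambda>i. if i < n then of_int (w i) / of_int (net_scale n) else 0)"

definition net :: "nat \<Rightarrow> rvec set" where
  "net n = net_point n ` net_grid n"

lemma net_scale_ge: "of_int (net_scale n) \<ge> 2 * sqrt (real n)"
  unfolding net_scale_def by (rule le_of_int_ceiling)

lemma net_scale_pos: "n \<ge> 1 \<Longrightarrow> of_int (net_scale n) > (0::real)"
  using net_scale_ge[of n] real_sqrt_ge_one[of "real n"] by linarith

lemma net_scale_power2_ge: "of_int (net_scale n) ^ 2 \<ge> 4 * real n"
  using power_mono[OF net_scale_ge[of n], of 2] by (simp add: power_mult_distrib)

lemma net_scale_power2_le: "of_int (net_scale n) ^ 2 \<le> 9 * real n"
proof (cases "n = 0")
  case False
  then have "sqrt (real n) \<ge> 1"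
    by simp
  then have "of_int (net_scale n) \<le> 3 * sqrt (real n)"
    using ceiling_correct[of "2 * sqrt (real n)"] unfolding net_scale_def by linarith
  then have "of_int (net_scale n) ^ 2 \<le> (3 * sqrt (real n)) ^ 2"
    using net_scale_ge[of n] by (intro power_mono) auto
  then show ?thesis by (simp add: power_mult_distrib)
qed (simp add: net_scale_def)

lemma finite_net_grid: "finite (net_grid n)"
  unfolding net_grid_def by (simp add: finite_PiE)

lemma finite_net: "finite (net n)"
  by (simp add: net_def finite_net_grid)

lemma sum_exp_neg_power2_le: "(\<Sum>z\<in>{-L..L::int}. exp (- of_int (z\<^sup>2))) \<le> (4::real)"
proof -
  define K where "K = {0..nat L}"
  have le: "exp (- of_int (z\<^sup>2)) \<le> (1/2::real) ^ nat \<bar>z\<bar>" for z :: int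
  proof -
    have "\<bar>z\<bar> \<le> z\<^sup>2"
      using mult_left_mono[of 1 "\<bar>z\<bar>" "\<bar>z\<bar>"] by (cases "z = 0") (auto simp: power2_eq_square)
    then have "real (nat \<bar>z\<bar>) \<le> of_int (z\<^sup>2)"
      by (metis of_int_le_iff of_nat_nat abs_ge_zero)
    then have "exp (- of_int (z\<^sup>2)) \<le> exp (- real (nat \<bar>z\<bar>))"
      by simp
    also have "\<dots> = exp (-1) ^ nat \<bar>z\<bar>"
      by (simp add: exp_of_nat_mult[symmetric])
    also have "\<dots> \<le> (1/2) ^ nat \<bar>z\<bar>"
      using exp_ge_add_one_self[of 1] by (intro power_mono) (auto simp: exp_minus field_simps)
    finally show ?thesis .
  qed
  have geometric: "(\<Sum>k\<in>K. (1/2::real) ^ k) \<le> 2"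
    using geometric_sum_less[of "1/2::real" K] by (simp add: K_def)
  have cover: "{-L..L} \<subseteq> int ` K \<union> uminus ` int ` K"
  proof
    fix z assume "z \<in> {-L..L}"
    then show "z \<in> int ` K \<union> uminus ` int ` K"
      unfolding K_def by (cases "z \<ge> 0") (auto intro!: image_eqI[of z int "nat z"]
          image_eqI[of z uminus "- z"] image_eqI[of "- z" int "nat (- z)"])
  qed
  have "(\<Sum>z\<in>{-L..L}. exp (- of_int (z\<^sup>2))) \<le> (\<Sum>z\<in>int ` K \<union> uminus ` int ` K. (1/2::real) ^ nat \<bar>z\<bar>)"
    using cover by (intro order_trans[OF sum_mono[OF le]] sum_mono2) (auto simp: K_def)
  also have "\<dots> \<le> (\<Sum>z\<in>int ` K. (1/2::real) ^ nat \<bar>z\<bar>) + (\<Sum>z\<in>uminus ` int ` K. (1/2) ^ nat \<bar>z\<bar>)"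
    by (subst sum_Un) (auto simp: K_def intro: sum_nonneg)
  also have "\<dots> = (\<Sum>k\<in>K. (1/2) ^ k) + (\<Sum>k\<in>K. (1/2) ^ k)"
    by (simp add: sum.reindex inj_on_def image_image)
  finally show ?thesis
    using geometric by simp
qed

lemma card_net_grid: "real (card (net_grid n)) \<le> (4 * exp 36) ^ n"
proof -
  define L where "L = 2 * net_scale n"
  define W where "W = PiE {..<n} (\<lambda>_. {-L..L})"
  define h where "h w = exp (36 * real n) * (\<Prod>i<n. exp (- of_int ((w i)\<^sup>2)))" for w :: "nat \<Rightarrow> int"
  have h1: "h w \<ge> 1" if "w \<in> net_grid n" for w
  proof -
    have "(\<Sum>i<n. (w i)\<^sup>2) \<le> 4 * (net_scale n)\<^sup>2"
      using that by (simp add: net_grid_def)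
    then have "real_of_int (\<Sum>i<n. (w i)\<^sup>2) \<le> real_of_int (4 * (net_scale n)\<^sup>2)"
      by (simp only: of_int_le_iff)
    then have "(\<Sum>i<n. of_int ((w i)\<^sup>2)) \<le> 36 * real n"
      using net_scale_power2_le[of n] by simp
    then show ?thesis
      by (simp add: h_def exp_sum[symmetric] exp_add[symmetric] sum_negf)
  qed
  have "real (card (net_grid n)) \<le> (\<Sum>w\<in>net_grid n. h w)"
    using h1 sum_mono[of "net_grid n" "\<lambda>_. 1::real" h] by simp
  also have "\<dots> \<le> (\<Sum>w\<in>W. h w)"
  proof (rule sum_mono2)
    show "finite W"
      by (simp add: W_def finite_PiE)
    show "net_grid n \<subseteq> W"
      by (auto simp: W_def L_def net_grid_def)
  qed (simp add: h_def prod_nonneg)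
  also have "\<dots> = exp (36 * real n) * (\<Prod>i<n. \<Sum>z\<in>{-L..L}. exp (- of_int (z\<^sup>2)))"
    unfolding h_def W_def sum_distrib_left[symmetric]
    by (subst prod_sum_PiE) auto
  also have "\<dots> \<le> exp (36 * real n) * 4 ^ n"
    using prod_mono[of "{..<n}" "\<lambda>_. \<Sum>z\<in>{-L..L}. exp (- of_int (z\<^sup>2))" "\<lambda>_. 4::real"]
      sum_exp_neg_power2_le[of L] by (simp add: sum_nonneg)
  also have "\<dots> = (4 * exp 36) ^ n"
    by (simp add: power_mult_distrib exp_of_nat_mult[symmetric] mult.commute)
  finally show ?thesis .
qed

lemma card_net: "real (card (net n)) \<le> (4 * exp 36) ^ n"
  using card_image_le[OF finite_net_grid, of "net_point n"] card_net_grid[of n]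
  unfolding net_def by (meson of_nat_le_iff order_trans)

lemma vnorm_net_point:
  "(vnorm n (net_point n w))\<^sup>2 = (\<Sum>i<n. (of_int (w i))\<^sup>2) / of_int (net_scale n) ^ 2"
  by (simp add: vnorm_power2 net_point_def power_divide sum_divide_distrib)

lemma vnorm_net_le:
  assumes "y \<in> net n"
  shows "vnorm n y \<le> 2"
proof (cases "n = 0")
  case True
  then show ?thesis by (simp add: vnorm_def)
next
  case False
  obtain w where w: "w \<in> net_grid n" and y: "y = net_point n w"
    using assms by (auto simp: net_def)
  have "real_of_int (\<Sum>i<n. (w i)\<^sup>2) \<le> real_of_int (4 * (net_scale n)\<^sup>2)"
    using w unfolding net_grid_def of_int_le_iff by simp
  then have "(vnorm n y)\<^sup>2 \<le> 2\<^sup>2"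
    using False net_scale_pos[of n] by (simp add: y vnorm_net_point divide_le_eq)
  then show ?thesis
    by (rule power2_le_imp_le) simp
qed

lemma net_approx:
  assumes n: "n \<ge> 1" and x: "vnorm n x = 1"
  shows "\<exists>y\<in>net n. vnorm n (\<lambda>i. x i - y i) \<le> 1/4"
proof -
  define K where "K = real_of_int (net_scale n)"
  have K: "K > 0" "K\<^sup>2 \<ge> 4 * real n"
    using net_scale_pos[OF n] net_scale_power2_ge[of n] by (simp_all add: K_def)
  define w where "w = restrict (\<lambda>i. round (K * x i)) {..<n}"
  define y where "y = net_point n w"
  have w_y: "of_int (w i) = K * y i" if "i < n" for i
    using that K by (simp add: y_def net_point_def K_def w_def)
  have "\<bar>x i - y i\<bar> \<le> 1 / (2 * K)" if "i < n" for i
  proof -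
    have "x i - y i = (K * x i - of_int (round (K * x i))) / K"
      using w_y[OF that] K by (simp add: w_def that field_simps)
    moreover have "\<bar>K * x i - of_int (round (K * x i))\<bar> / K \<le> (1/2) / K"
      using of_int_round_abs_le[of "K * x i"] K by (intro divide_right_mono) (auto simp: abs_minus_commute)
    ultimately show ?thesis
      using K by simp
  qed
  then have "(\<Sum>i<n. (x i - y i)\<^sup>2) \<le> (\<Sum>i<n. (1 / (2 * K))\<^sup>2)"
    using K by (intro sum_mono) (simp add: abs_le_square_iff[symmetric])
  also have "\<dots> = real n / (4 * K\<^sup>2)"
    by (simp add: power2_eq_square field_simps)
  also have "\<dots> \<le> (1/4)\<^sup>2"
    using K by (simp add: field_simps)
  finally have close: "vnorm n (\<lambda>i. x i - y i) \<le> 1/4"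
    unfolding vnorm_def using real_sqrt_le_mono by fastforce
  have "vnorm n y \<le> vnorm n x + vnorm n (\<lambda>i. y i - x i)"
    using vnorm_add_le[of n x "\<lambda>i. y i - x i"] by simp
  then have y_small: "vnorm n y \<le> 5/4"
    using x close vnorm_diff_commute[of n x y] by simp
  have "w \<in> net_grid n"
    unfolding net_grid_def
  proof (intro CollectI conjI PiE_I)
    fix i assume "i \<in> {..<n}"
    then have "\<bar>of_int (w i)\<bar> \<le> K * 2"
      using abs_le_vnorm[of i n y] y_small w_y[of i] K by (simp add: abs_mult)
    then show "w i \<in> {-2 * net_scale n..2 * net_scale n}"
      by (simp add: K_def abs_le_iff)
  next
    have "(\<Sum>i<n. (of_int (w i))\<^sup>2) = K\<^sup>2 * (vnorm n y)\<^sup>2"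
      by (simp add: w_y vnorm_power2 power_mult_distrib sum_distrib_left)
    also have "\<dots> \<le> K\<^sup>2 * 2\<^sup>2"
      using y_small vnorm_nonneg[of n y] by (intro mult_left_mono power_mono) auto
    finally have "real_of_int (\<Sum>i<n. (w i)\<^sup>2) \<le> real_of_int (4 * (net_scale n)\<^sup>2)"
      by (simp add: K_def)
    then show "(\<Sum>i<n. (w i)\<^sup>2) \<le> 4 * (net_scale n)\<^sup>2"
      by (simp only: of_int_le_iff)
  qed (simp add: w_def)
  then show ?thesis
    using close by (auto simp: net_def y_def)
qed

text \<open>Replacing unit vectors by net points within 1/4 loses at most 3/4 of the supremum \<Gamma> of
  the form over unit vectors, so \<Gamma> \<le> T + 3\<Gamma>/4.\<close>
lemma abs_bil_le_of_net:
  assumes p: "p \<ge> 1" and q: "q \<ge> 1"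
    and net_bound: "\<And>y z. y \<in> net p \<Longrightarrow> z \<in> net q \<Longrightarrow> \<bar>bil p q G y z\<bar> \<le> T"
  shows "\<bar>bil p q G x w\<bar> \<le> 4 * T * vnorm p x * vnorm q w"
proof -
  define S where "S = {\<bar>bil p q G x w\<bar> | x w. vnorm p x = 1 \<and> vnorm q w = 1}"
  define \<Gamma> where "\<Gamma> = Sup S"
  have "bdd_above S"
    unfolding S_def by (auto intro!: bdd_aboveI abs_bil_le_sum_abs)
  then have unit: "\<bar>bil p q G x w\<bar> \<le> \<Gamma>" if "vnorm p x = 1" "vnorm q w = 1" for x w
    unfolding \<Gamma>_def by (rule cSup_upper[rotated]) (use that in \<open>auto simp: S_def\<close>)
  note hom = abs_bil_le_homogeneous[of p q G \<Gamma>, OF unit]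
  have \<Gamma>_nonneg: "\<Gamma> \<ge> 0"
    using unit[OF vnorm_unit_vector[OF p] vnorm_unit_vector[OF q]] by linarith
  have "\<Gamma> \<le> T + 3/4 * \<Gamma>"
    unfolding \<Gamma>_def
  proof (rule cSup_least)
    show "S \<noteq> {}"
      unfolding S_def using vnorm_unit_vector[OF p] vnorm_unit_vector[OF q] by blast
  next
    fix s assume "s \<in> S"
    then obtain x w where s: "s = \<bar>bil p q G x w\<bar>" and x: "vnorm p x = 1" and w: "vnorm q w = 1"
      by (auto simp: S_def)
    obtain y z where y: "y \<in> net p" "vnorm p (\<lambda>i. x i - y i) \<le> 1/4"
      and z: "z \<in> net q" "vnorm q (\<lambda>i. w i - z i) \<le> 1/4"
      using net_approx[OF p x] net_approx[OF q w] by blast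
    have "bil p q G x w = bil p q G y z + bil p q G (\<lambda>i. x i - y i) w + bil p q G y (\<lambda>i. w i - z i)"
      by (simp add: bil_diff_left bil_diff_right)
    moreover have "\<Gamma> * vnorm p (\<lambda>i. x i - y i) * vnorm q w \<le> \<Gamma> * (1/4) * 1"
      using y(2) w \<Gamma>_nonneg by (intro mult_mono mult_left_mono) (auto simp: vnorm_nonneg)
    moreover have "\<Gamma> * vnorm p y * vnorm q (\<lambda>i. w i - z i) \<le> \<Gamma> * 2 * (1/4)"
      using vnorm_net_le[OF y(1)] z(2) \<Gamma>_nonneg by (intro mult_mono mult_left_mono) (auto simp: vnorm_nonneg)
    ultimately show "s \<le> T + 3/4 * Sup S"
      using s net_bound[OF y(1) z(1)] hom[of "\<lambda>i. x i - y i" w] hom[of y "\<lambda>i. w i - z i"] unfolding \<Gamma>_def[symmetric] by linarith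
  qed
  then have "\<Gamma> \<le> 4 * T"
    by simp
  then show ?thesis
    using hom[of x w] mult_right_mono[of \<Gamma> "4 * T" "vnorm p x * vnorm q w"]
    by (simp add: vnorm_nonneg mult.assoc)
qed

section \<open>Gaussian tails\<close>

lemma fact_double_div_le: "fact (2 * k) / (2 ^ k * fact k) \<le> (real k) ^ k"
proof -
  have d: "fact k dvd (fact (2 * k) :: nat)" by (intro fact_dvd) simp
  have "(fact (2 * k) :: nat) div fact (2 * k - k) \<le> (2 * k) ^ k" by (rule fact_div_fact_le_pow) simp
  then have "(fact (2 * k) :: nat) div fact k \<le> (2 * k) ^ k" by simp
  then have "(fact (2 * k) :: nat) \<le> fact k * (2 * k) ^ k"
    using d by (metis dvd_mult_div_cancel mult_le_mono2)
  then have "real (fact (2 * k)) \<le> real (fact k * (2 * k) ^ k)" by (simp only: of_nat_le_iff)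
  then have f: "(fact (2 * k) :: real) \<le> fact k * (2 * real k) ^ k" by simp
  have "fact (2 * k) / (2 ^ k * fact k) \<le> fact k * (2 * real k) ^ k / (2 ^ k * fact k)"
    using f by (intro divide_right_mono) auto
  also have "\<dots> = (real k) ^ k" by (simp add: power_mult_distrib)
  finally show ?thesis .
qed

text \<open>Markov's inequality for the 2k-th moment s^(2k) (2k)!/(2^k k!) \<le> (s^2 k)^k.\<close>
lemma normal_tail_le:
  assumes P: "prob_space P"
    and X: "distributed P lborel X (\<lambda>x. ennreal (normal_density 0 s x))"
    and s: "s > 0" and T: "T > 0"
  shows "measure P {\<omega>\<in>space P. T \<le> \<bar>X \<omega>\<bar>} \<le> (s\<^sup>2 * real k / T\<^sup>2) ^ k"
proof -
  interpret prob_space P by (rule P)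
  have [measurable]: "X \<in> borel_measurable P"
    using distributed_measurable[OF X] by simp
  have moment: "has_bochner_integral lborel (\<lambda>x. normal_density 0 s x * x ^ (2 * k))
      (fact (2 * k) / ((2 / s\<^sup>2) ^ k * fact k))"
    using normal_moment_even[where \<mu>=0 and \<sigma>=s and k=k] s by simp
  have integrable: "integrable P (\<lambda>\<omega>. X \<omega> ^ (2 * k))"
    using distributed_integrable[OF X, of "\<lambda>x. x ^ (2 * k)"] moment
    by (simp add: integrable.intros)
  have expectation: "(\<integral>\<omega>. X \<omega> ^ (2 * k) \<partial>P) = (s\<^sup>2) ^ k * (fact (2 * k) / (2 ^ k * fact k))"
    using distributed_integral[OF X, of "\<lambda>x. x ^ (2 * k)"] has_bochner_integral_integral_eq[OF moment]
    by (simp add: power_mult field_simps)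
  have "measure P {\<omega>\<in>space P. T \<le> \<bar>X \<omega>\<bar>} \<le> measure P {\<omega>\<in>space P. X \<omega> ^ (2 * k) \<ge> T ^ (2 * k)}"
  proof (intro finite_measure_mono subsetI)
    fix \<omega> assume "\<omega> \<in> {\<omega>\<in>space P. T \<le> \<bar>X \<omega>\<bar>}"
    then show "\<omega> \<in> {\<omega>\<in>space P. X \<omega> ^ (2 * k) \<ge> T ^ (2 * k)}"
      using power_mono[of T "\<bar>X \<omega>\<bar>" "2 * k"] T by (simp add: power_even_abs)
  qed measurable
  also have "\<dots> \<le> (\<integral>\<omega>. X \<omega> ^ (2 * k) \<partial>P) / T ^ (2 * k)"
    using T by (intro integral_Markov_inequality_measure[OF integrable]) (auto simp: power_mult)
  also have "\<dots> \<le> (s\<^sup>2) ^ k * (real k) ^ k / T ^ (2 * k)"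
    unfolding expectation
    using s T by (intro divide_right_mono mult_left_mono fact_double_div_le zero_le_power less_imp_le)
  also have "\<dots> = (s\<^sup>2 * real k / T\<^sup>2) ^ k"
    unfolding power_mult power_divide power_mult_distrib ..
  finally show ?thesis .
qed

lemma distributed_lincomb_std_normal:
  fixes X :: "'i \<Rightarrow> 'w \<Rightarrow> real" and \<phi> :: "'j \<Rightarrow> 'i" and c :: "'j \<Rightarrow> real"
  assumes P: "prob_space P" and J: "finite J" "inj_on \<phi> J" "\<phi> ` J \<subseteq> I"
    and indep: "prob_space.indep_vars P (\<lambda>_. borel) X I"
    and normal: "\<And>i. i \<in> I \<Longrightarrow> distributed P lborel (X i) (\<lambda>x. ennreal (std_normal_density x))"
    and nonzero: "\<exists>j\<in>J. c j \<noteq> 0"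
  shows "distributed P lborel (\<lambda>\<omega>. \<Sum>j\<in>J. c j * X (\<phi> j) \<omega>)
           (\<lambda>x. ennreal (normal_density 0 (sqrt (\<Sum>j\<in>J. (c j)\<^sup>2)) x))"
proof -
  interpret prob_space P by (rule P)
  define J' where "J' = {j\<in>J. c j \<noteq> 0}"
  define d where "d i = c (inv_into J' \<phi> i)" for i
  have J': "finite J'" "inj_on \<phi> J'" "\<phi> ` J' \<subseteq> I" "J' \<noteq> {}"
    using J nonzero by (auto simp: J'_def intro: inj_on_subset)
  have d: "d (\<phi> j) = c j" if "j \<in> J'" for j
    using J'(2) that by (simp add: d_def)
  have d_nonzero: "d i \<noteq> 0" if "i \<in> \<phi> ` J'" for i
    using that d by (auto simp: J'_def)
  have "indep_vars (\<lambda>_. borel) (\<lambda>i \<omega>. d i * X i \<omega>) (\<phi> ` J')"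
    using indep_vars_subset[OF indep J'(3)] by (rule indep_vars_compose2) simp
  moreover have "distributed P lborel (\<lambda>\<omega>. d i * X i \<omega>) (\<lambda>x. ennreal (normal_density 0 \<bar>d i\<bar> x))"
    if "i \<in> \<phi> ` J'" for i
    using normal_density_affine[OF normal, where \<alpha>="d i" and \<beta>=0] that J'(3) d_nonzero[OF that]
    by auto
  ultimately have "distributed P lborel (\<lambda>\<omega>. \<Sum>i\<in>\<phi> ` J'. d i * X i \<omega>)
      (\<lambda>x. ennreal (normal_density (\<Sum>i\<in>\<phi> ` J'. 0) (sqrt (\<Sum>i\<in>\<phi> ` J'. \<bar>d i\<bar>\<^sup>2)) x))"
    using J' d_nonzero by (intro sum_indep_normal) auto
  moreover have reindex: "(\<Sum>i\<in>\<phi> ` J'. f (d i) i) = (\<Sum>j\<in>J. f (c j) (\<phi> j))"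
    if "\<And>i. f 0 i = 0" for f :: "real \<Rightarrow> 'i \<Rightarrow> real"
    using J'(2) that by (simp add: sum.reindex d, intro sum.mono_neutral_left) (auto simp: J J'_def)
  ultimately show ?thesis
    using reindex[of "\<lambda>a i. a * X i _"] reindex[of "\<lambda>a i. a\<^sup>2"] by simp
qed

lemma measure_all_good_ge:
  assumes P: "prob_space P" and I: "finite I"
    and bad_sets: "\<And>i. i \<in> I \<Longrightarrow> {\<omega>\<in>space P. \<not> Q i \<omega>} \<in> sets P"
    and bad_small: "\<And>i. i \<in> I \<Longrightarrow> measure P {\<omega>\<in>space P. \<not> Q i \<omega>} \<le> r"
  shows "\<exists>S\<in>sets P. measure P S \<ge> 1 - real (card I) * r \<and> (\<forall>\<omega>\<in>S. \<forall>i\<in>I. Q i \<omega>)"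
proof -
  interpret prob_space P by (rule P)
  define U where "U = (\<Union>i\<in>I. {\<omega>\<in>space P. \<not> Q i \<omega>})"
  have U: "U \<in> sets P"
    using I bad_sets by (auto simp: U_def)
  have "measure P U \<le> (\<Sum>i\<in>I. measure P {\<omega>\<in>space P. \<not> Q i \<omega>})"
    unfolding U_def using I bad_sets by (intro finite_measure_subadditive_finite) auto
  also have "\<dots> \<le> real (card I) * r"
    using sum_mono[OF bad_small] by simp
  finally show ?thesis
    using U prob_compl[OF U] by (intro bexI[of _ "space P - U"]) (auto simp: U_def)
qed

definition noise_const :: "real \<Rightarrow> real" where
  "noise_const \<epsilon> = 16 * sqrt (4 * exp 36 / min \<epsilon> 1)"

text \<open>With k = p + q and threshold T = 4 \<surd>(4 e^36 k / \<epsilon>), each of the at most (4 e^36)^k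
  pairs of net points exceeds T with probability at most (\<epsilon> / (4 e^36))^k.\<close>
lemma gaussian_bilinear_form_bound:
  fixes G :: "'w \<Rightarrow> rmat"
  assumes P: "prob_space P" and p: "p \<ge> 1" and q: "q \<ge> 1"
    and gaussian: "\<And>x w. vnorm p x * vnorm q w \<noteq> 0 \<Longrightarrow>
       distributed P lborel (\<lambda>\<omega>. bil p q (G \<omega>) x w)
         (\<lambda>t. ennreal (normal_density 0 (vnorm p x * vnorm q w) t))"
    and \<epsilon>: "\<epsilon> > 0"
  shows "\<exists>S\<in>sets P. measure P S \<ge> 1 - \<epsilon> \<and> (\<forall>\<omega>\<in>S. \<forall>x w.
     \<bar>bil p q (G \<omega>) x w\<bar> \<le> noise_const \<epsilon> * sqrt (real (p + q)) * vnorm p x * vnorm q w)"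
proof -
  interpret prob_space P by (rule P)
  define c e k where "c = 4 * exp (36::real)" and "e = min \<epsilon> 1" and "k = p + q"
  define T where "T = 4 * sqrt (c * real k / e)"
  have e: "0 < e" "e \<le> 1" "e \<le> \<epsilon>" and c: "c > 0" and k: "k \<ge> 1"
    using \<epsilon> p by (auto simp: e_def c_def k_def)
  have T: "T > 0" "T\<^sup>2 = 16 * c * real k / e"
    using e c k by (simp_all add: T_def power_mult_distrib)
  define Q where "Q yz \<omega> \<longleftrightarrow> \<bar>bil p q (G \<omega>) (fst yz) (snd yz)\<bar> < T" for yz \<omega>
  have bad: "{\<omega>\<in>space P. \<not> Q yz \<omega>} \<in> sets P \<and> measure P {\<omega>\<in>space P. \<not> Q yz \<omega>} \<le> (e / c) ^ k"
    if "yz \<in> net p \<times> net q" for yz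
  proof (cases "vnorm p (fst yz) * vnorm q (snd yz) = 0")
    case True
    then have "{\<omega>\<in>space P. \<not> Q yz \<omega>} = {}"
      using T by (simp add: Q_def bil_eq_0_if_vnorm_eq_0)
    then show ?thesis
      using e c by (simp only:) simp
  next
    case False
    define s where "s = vnorm p (fst yz) * vnorm q (snd yz)"
    note X = gaussian[OF False, folded s_def]
    have "s \<le> 2 * 2"
      using that vnorm_net_le[of "fst yz" p] vnorm_net_le[of "snd yz" q]
      unfolding s_def by (intro mult_mono) (auto simp: vnorm_nonneg)
    then have s: "s > 0" "s \<le> 4"
      using False by (auto simp: s_def less_le vnorm_nonneg)
    have "s\<^sup>2 * real k / T\<^sup>2 \<le> 16 * real k / T\<^sup>2"
      using s power_mono[of s 4 2] by (intro divide_right_mono mult_right_mono) auto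
    also have "\<dots> = e / c"
      using T c k by simp
    finally have "(s\<^sup>2 * real k / T\<^sup>2) ^ k \<le> (e / c) ^ k"
      by (intro power_mono) auto
    moreover have "(\<lambda>\<omega>. bil p q (G \<omega>) (fst yz) (snd yz)) \<in> borel_measurable P"
      using distributed_measurable[OF X] by simp
    ultimately show ?thesis
      using normal_tail_le[OF P X s(1) T(1), of k] by (simp add: Q_def not_less)
  qed
  have "real (card (net p \<times> net q)) * (e / c) ^ k \<le> c ^ k * (e / c) ^ k"
  proof (rule mult_right_mono)
    show "real (card (net p \<times> net q)) \<le> c ^ k"
      using card_net[of p, folded c_def] card_net[of q, folded c_def]
      by (auto simp: card_cartesian_product k_def power_add intro: mult_mono)
  qed (use e c in simp)
  also have "\<dots> \<le> \<epsilon>"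
    using e c k power_decreasing[of 1 k e] by (simp add: power_divide)
  finally obtain S where S: "S \<in> sets P" "measure P S \<ge> 1 - \<epsilon>"
    and good: "\<And>\<omega> y z. \<omega> \<in> S \<Longrightarrow> y \<in> net p \<Longrightarrow> z \<in> net q \<Longrightarrow> \<bar>bil p q (G \<omega>) y z\<bar> < T"
    using measure_all_good_ge[OF P, of "net p \<times> net q" Q "(e / c) ^ k"] bad finite_net
    by (auto simp: Q_def)
  have "noise_const \<epsilon> * sqrt (real k) = 4 * T"
    by (simp add: noise_const_def T_def c_def e_def real_sqrt_mult real_sqrt_divide)
  then show ?thesis
    using S abs_bil_le_of_net[OF p q less_imp_le[OF good]] by (auto simp: k_def)
qed

section \<open>Rearrangement of the Kronecker model\<close>

lemma sum_lessThan_mult_eq: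
  fixes f :: "nat \<Rightarrow> 'a::comm_monoid_add"
  shows "(\<Sum>i<a. \<Sum>j<b. f (i * b + j)) = (\<Sum>k<a * b. f k)"
proof (induction a)
  case (Suc a)
  have "(\<Sum>k<Suc a * b. f k) = (\<Sum>k<a * b. f k) + (\<Sum>k\<in>{a * b..<a * b + b}. f k)"
    by (simp add: add.commute lessThan_atLeast0 sum.atLeastLessThan_concat)
  also have "(\<Sum>k\<in>{a * b..<a * b + b}. f k) = (\<Sum>j<b. f (a * b + j))"
    using sum.shift_bounds_nat_ivl[of f 0 "a * b" b] by (simp add: add.commute lessThan_atLeast0)
  finally show ?case
    using Suc by simp
qed simp

lemma frob_eq_vnorm_vec: "frob a b C = vnorm (a * b) (vec b C)"
  unfolding frob_def vnorm_def sum_lessThan_mult_eq[symmetric] by (simp add: vec_def)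

lemma frob_unvec_diff_power2:
  "(frob a b (\<lambda>i j. unvec b u i j - C i j))\<^sup>2 = (\<Sum>k<a * b. (u k - vec b C k)\<^sup>2)"
  unfolding frob_def sum_lessThan_mult_eq[symmetric] by (simp add: sum_nonneg vec_def unvec_def)

lemma two_power_complement_split:
  "m \<le> M \<Longrightarrow> n \<le> N \<Longrightarrow> (2::nat) ^ (M + N - m - n) = 2 ^ (M - m) * 2 ^ (N - n)"
  by (simp add: power_add[symmetric])

lemma rearr_kron_plus:
  assumes mn: "m \<le> M" "n \<le> N" and c: "c < 2 ^ (M + N - m - n)"
  shows "rearr M N m n (\<lambda>i j. l * kron (2^(M-m)) (2^(N-n)) A B i j + t * E i j) r c
        = l * vec (2^n) A r * vec (2^(N-n)) B c + t * rearr M N m n E r c"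
proof -
  have "c div 2 ^ (N - n) < 2 ^ (M - m)"
    using c two_power_complement_split[OF mn] by (simp add: less_mult_imp_div_less)
  then show ?thesis
    by (simp add: rearr_def kron_def vec_def)
qed

lemma mult_add_less_mult: "x < X \<Longrightarrow> y < R \<Longrightarrow> x * R + y < X * (R::nat)"
  using mult_le_mono1[of "Suc x" X R] by simp

lemma mult_add_inject:
  fixes x y x' y' R :: nat
  assumes "y < R" "y' < R" "x * R + y = x' * R + y'"
  shows "x = x' \<and> y = y'"
proof -
  have "(x * R + y) div R = x" "(x * R + y) mod R = y" "(x' * R + y') div R = x'" "(x' * R + y') mod R = y'"
    using assms(1,2) by simp_all
  then show ?thesis
    using assms(3) by metis
qed

text \<open>Entry (r, c) of R_{m,n}[C] is the entry of C at rearr_index M N m n (r, c); this index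
  map is injective, so the rearranged noise again has i.i.d. entries.\<close>
definition rearr_index :: "nat \<Rightarrow> nat \<Rightarrow> nat \<Rightarrow> nat \<Rightarrow> nat \<times> nat \<Rightarrow> nat \<times> nat" where
  "rearr_index M N m n rc = ((fst rc div 2^n) * 2^(M-m) + snd rc div 2^(N-n),
                             (fst rc mod 2^n) * 2^(N-n) + snd rc mod 2^(N-n))"

lemma rearr_eq_rearr_index: "rearr M N m n C r c = (case rearr_index M N m n (r, c) of (i, j) \<Rightarrow> C i j)"
  by (simp add: rearr_def rearr_index_def)

lemma inj_on_rearr_index:
  assumes mn: "m \<le> M" "n \<le> N"
  shows "inj_on (rearr_index M N m n) ({..<2^(m+n)} \<times> {..<2^(M+N-m-n)})"
proof (rule inj_onI, clarify)
  fix r c r' c' :: nat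
  assume "c < 2^(M+N-m-n)" "c' < 2^(M+N-m-n)"
    and eq: "rearr_index M N m n (r, c) = rearr_index M N m n (r', c')"
  then have "c div 2^(N-n) < 2^(M-m)" "c' div 2^(N-n) < 2^(M-m)"
    using two_power_complement_split[OF mn] by (simp_all add: less_mult_imp_div_less)
  moreover have "r div 2^n * 2^(M-m) + c div 2^(N-n) = r' div 2^n * 2^(M-m) + c' div 2^(N-n)"
    using eq by (simp add: rearr_index_def)
  ultimately have "r div 2^n = r' div 2^n \<and> c div 2^(N-n) = c' div 2^(N-n)"
    by (rule mult_add_inject)
  moreover have "r mod 2^n * 2^(N-n) + c mod 2^(N-n) = r' mod 2^n * 2^(N-n) + c' mod 2^(N-n)"
    using eq by (simp add: rearr_index_def)
  then have "r mod 2^n = r' mod 2^n \<and> c mod 2^(N-n) = c' mod 2^(N-n)"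
    using mult_add_inject[OF mod_less_divisor mod_less_divisor, of "2^(N-n)" "r mod 2^n" c "r' mod 2^n" c']
    by simp
  ultimately show "r = r' \<and> c = c'"
    by (metis div_mult_mod_eq)
qed

lemma rearr_index_image_subset:
  assumes mn: "m \<le> M" "n \<le> N"
  shows "rearr_index M N m n ` ({..<2^(m+n)} \<times> {..<2^(M+N-m-n)}) \<subseteq> {..<2^M} \<times> {..<2^N}"
proof (rule image_subsetI)
  fix rc :: "nat \<times> nat" assume "rc \<in> {..<2^(m+n)} \<times> {..<2^(M+N-m-n)}"
  then obtain r c :: nat where rc: "rc = (r, c)" and r: "r < 2^(m+n)" and c: "c < 2^(M+N-m-n)"
    by blast
  have "r div 2^n < 2^m" "c div 2^(N-n) < 2^(M-m)"
    using r c two_power_complement_split[OF mn] by (simp_all add: power_add less_mult_imp_div_less)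
  then have "(r div 2^n) * 2^(M-m) + c div 2^(N-n) < 2^m * 2^(M-m)"
    "(r mod 2^n) * 2^(N-n) + c mod 2^(N-n) < 2^n * 2^(N-n)"
    by (auto intro!: mult_add_less_mult)
  then show "rearr_index M N m n rc \<in> {..<2^M} \<times> {..<2^N}"
    using mn by (simp add: rc rearr_index_def power_add[symmetric])
qed

lemma bil_rearr_std_normal:
  fixes E :: "'w \<Rightarrow> rmat"
  assumes P: "prob_space P" and mn: "m \<le> M" "n \<le> N"
    and normal: "\<And>i j. i < 2 ^ M \<Longrightarrow> j < 2 ^ N \<Longrightarrow>
                  distributed P lborel (\<lambda>\<omega>. E \<omega> i j) (\<lambda>x. ennreal (std_normal_density x))"
    and indep: "prob_space.indep_vars P (\<lambda>_. borel) (\<lambda>ij \<omega>. E \<omega> (fst ij) (snd ij))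
                  ({..<2 ^ M} \<times> {..<2 ^ N})"
    and nonzero: "vnorm (2^(m+n)) x * vnorm (2^(M+N-m-n)) w \<noteq> 0"
  shows "distributed P lborel (\<lambda>\<omega>. bil (2^(m+n)) (2^(M+N-m-n)) (rearr M N m n (E \<omega>)) x w)
           (\<lambda>t. ennreal (normal_density 0 (vnorm (2^(m+n)) x * vnorm (2^(M+N-m-n)) w) t))"
proof -
  define J :: "(nat \<times> nat) set" where "J = {..<2^(m+n)} \<times> {..<2^(M+N-m-n)}"
  define coeff where "coeff rc = x (fst rc) * w (snd rc)" for rc
  have "distributed P lborel (\<lambda>\<omega>. \<Sum>rc\<in>J. coeff rc * E \<omega> (fst (rearr_index M N m n rc)) (snd (rearr_index M N m n rc)))
      (\<lambda>t. ennreal (normal_density 0 (sqrt (\<Sum>rc\<in>J. (coeff rc)\<^sup>2)) t))"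
    using nonzero
    by (intro distributed_lincomb_std_normal[OF P _ inj_on_rearr_index[OF mn]
          rearr_index_image_subset[OF mn] indep, where c=coeff, folded J_def])
      (auto simp: J_def coeff_def vnorm_eq_0_iff normal)
  moreover have "(\<Sum>rc\<in>J. coeff rc * E \<omega> (fst (rearr_index M N m n rc)) (snd (rearr_index M N m n rc)))
      = bil (2^(m+n)) (2^(M+N-m-n)) (rearr M N m n (E \<omega>)) x w" for \<omega>
    by (simp add: J_def coeff_def bil_def sum.cartesian_product' rearr_eq_rearr_index split_def mult_ac)
  moreover have "sqrt (\<Sum>rc\<in>J. (coeff rc)\<^sup>2) = vnorm (2^(m+n)) x * vnorm (2^(M+N-m-n)) w"
    by (simp add: J_def coeff_def sum.cartesian_product' power_mult_distrib vnorm_def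
        sum_product[symmetric] real_sqrt_mult)
  ultimately show ?thesis
    by simp
qed

definition kron_rate :: "nat \<Rightarrow> nat \<Rightarrow> nat \<Rightarrow> nat \<Rightarrow> real" where
  "kron_rate M N m n = 2 powr (- real (m + n) / 2) + 2 powr (- real ((M - m) + (N - n)) / 2)"

lemma noise_scale_le_kron_rate:
  assumes "m \<le> M" "n \<le> N"
  shows "2 powr (- real (M + N) / 2) * sqrt (real ((2::nat) ^ (m + n) + 2 ^ (M + N - m - n)))
         \<le> kron_rate M N m n"
proof -
  define s t where "s = m + n" and "t = (M - m) + (N - n)"
  have sqrt2: "sqrt (real ((2::nat) ^ j)) = 2 powr (real j / 2)" for j
    using powr_half_sqrt_powr[of 2 "real j"] by (simp add: powr_realpow)
  have "2 powr (- real (M + N) / 2) * sqrt (real ((2::nat) ^ (m + n) + 2 ^ (M + N - m - n)))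
      = 2 powr (- real (s + t) / 2) * sqrt (real ((2::nat) ^ s + 2 ^ t))"
    using assms by (simp add: s_def t_def)
  also have "\<dots> \<le> 2 powr (- real (s + t) / 2) * (2 powr (real s / 2) + 2 powr (real t / 2))"
    using sqrt_add_le_add_sqrt[of "2 ^ s" "2 ^ t"] by (intro mult_left_mono) (simp_all add: sqrt2[symmetric])
  also have "\<dots> = 2 powr (- real s / 2) + 2 powr (- real t / 2)"
    by (simp add: distrib_left powr_add[symmetric] add_divide_distrib diff_divide_distrib)
  also have "\<dots> = kron_rate M N m n"
    by (simp add: kron_rate_def s_def t_def)
  finally show ?thesis .
qed

section \<open>Estimation error\<close>

lemma kron_estimation_errors:
  fixes M N m n :: nat and E Y :: rmat and u v :: rvec
  defines "p \<equiv> 2 ^ (m + n)" and "q \<equiv> 2 ^ (M + N - m - n)"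
  assumes mn: "m \<le> M" "n \<le> N" and lam: "lam > 0" and \<tau>: "\<tau> \<ge> 0"
    and A: "frob (2 ^ m) (2 ^ n) A = 1" and B: "frob (2 ^ (M - m)) (2 ^ (N - n)) B = 1"
    and Y: "Y = (\<lambda>i j. lam * kron (2 ^ (M - m)) (2 ^ (N - n)) A B i j + \<tau> * E i j)"
    and noise: "\<And>x w. \<bar>bil p q (rearr M N m n E) x w\<bar> \<le> K * vnorm p x * vnorm q w"
    and lead: "leading_sv_pair p q (rearr M N m n Y) u v"
    and sign: "vinner p u (vec (2 ^ n) A) \<ge> 0"
  shows "\<bar>(spec_norm p q (rearr M N m n Y) - lam) / lam\<bar> \<le> 8 * (\<tau> * K) / lam"
    and "(frob (2 ^ m) (2 ^ n) (\<lambda>i j. unvec (2 ^ n) u i j - A i j))\<^sup>2 \<le> 8 * (\<tau> * K) / lam"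
    and "(frob (2 ^ (M - m)) (2 ^ (N - n)) (\<lambda>i j. unvec (2 ^ (N - n)) v i j - B i j))\<^sup>2
           \<le> 8 * (\<tau> * K) / lam"
proof -
  define a b where "a = vec (2 ^ n) A" and "b = vec (2 ^ (N - n)) B"
  have q_split: "q = 2 ^ (M - m) * 2 ^ (N - n)"
    using two_power_complement_split[OF mn] by (simp add: q_def)
  have a: "vnorm p a = 1" and b: "vnorm q b = 1"
    using A B by (simp_all add: a_def b_def p_def q_split frob_eq_vnorm_vec power_add)
  have decomposition: "\<forall>r<p. \<forall>c<q. rearr M N m n Y r c = lam * a r * b c + \<tau> * rearr M N m n E r c"
    unfolding Y using rearr_kron_plus[OF mn] by (simp add: a_def b_def q_def)
  have noise_op: "\<bar>bil p q (\<lambda>r c. \<tau> * rearr M N m n E r c) x w\<bar> \<le> \<tau> * K * vnorm p x * vnorm q w" for x w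
    using mult_left_mono[OF noise \<tau>] by (simp add: bil_scale_matrix abs_mult \<tau> mult_ac)
  note errors = rank_one_perturbation[OF decomposition a b noise_op lead sign[folded a_def] lam]
  have "\<bar>spec_norm p q (rearr M N m n Y) - lam\<bar> / lam \<le> \<tau> * K / lam"
    using errors(1) lam by (simp add: divide_right_mono)
  moreover have "\<tau> * K \<ge> 0"
    using errors(1) by linarith
  ultimately show "\<bar>(spec_norm p q (rearr M N m n Y) - lam) / lam\<bar> \<le> 8 * (\<tau> * K) / lam"
    using lam by (simp add: abs_divide divide_right_mono order_trans)
  show "(frob (2 ^ m) (2 ^ n) (\<lambda>i j. unvec (2 ^ n) u i j - A i j))\<^sup>2 \<le> 8 * (\<tau> * K) / lam"
    using errors(2) by (simp add: frob_unvec_diff_power2 a_def p_def power_add)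
  show "(frob (2 ^ (M - m)) (2 ^ (N - n)) (\<lambda>i j. unvec (2 ^ (N - n)) v i j - B i j))\<^sup>2
      \<le> 8 * (\<tau> * K) / lam"
    using errors(3) by (simp add: frob_unvec_diff_power2 b_def q_split)
qed

lemma kron_estimation_error_event:
  fixes P :: "'w measure" and E Y :: "'w \<Rightarrow> rmat" and u v :: "'w \<Rightarrow> rvec"
  assumes P: "prob_space P" and mn: "m \<le> M" "n \<le> N"
    and lam: "lam > 0" and \<sigma>: "\<sigma> > 0"
    and A: "frob (2 ^ m) (2 ^ n) A = 1" and B: "frob (2 ^ (M - m)) (2 ^ (N - n)) B = 1"
    and normal: "\<And>i j. i < 2 ^ M \<Longrightarrow> j < 2 ^ N \<Longrightarrow>
                  distributed P lborel (\<lambda>\<omega>. E \<omega> i j) (\<lambda>x. ennreal (std_normal_density x))"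
    and indep: "prob_space.indep_vars P (\<lambda>_. borel) (\<lambda>ij \<omega>. E \<omega> (fst ij) (snd ij))
                  ({..<2 ^ M} \<times> {..<2 ^ N})"
    and Y: "\<And>\<omega>. Y \<omega> = (\<lambda>i j. lam * kron (2 ^ (M - m)) (2 ^ (N - n)) A B i j
                  + \<sigma> * 2 powr (- real (M + N) / 2) * E \<omega> i j)"
    and lead: "\<And>\<omega>. \<omega> \<in> space P \<Longrightarrow>
                  leading_sv_pair (2 ^ (m + n)) (2 ^ (M + N - m - n)) (rearr M N m n (Y \<omega>)) (u \<omega>) (v \<omega>)"
    and sign: "\<And>\<omega>. \<omega> \<in> space P \<Longrightarrow> vinner (2 ^ (m + n)) (u \<omega>) (vec (2 ^ n) A) \<ge> 0"
    and \<epsilon>: "\<epsilon> > 0"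
  defines "bound \<equiv> 8 * noise_const \<epsilon> * (\<sigma> * kron_rate M N m n / lam)"
  shows "\<exists>S\<in>sets P. measure P S \<ge> 1 - \<epsilon> \<and> (\<forall>\<omega>\<in>S.
     \<bar>(spec_norm (2 ^ (m + n)) (2 ^ (M + N - m - n)) (rearr M N m n (Y \<omega>)) - lam) / lam\<bar> \<le> bound \<and>
     (frob (2 ^ m) (2 ^ n) (\<lambda>i j. unvec (2 ^ n) (u \<omega>) i j - A i j))\<^sup>2 \<le> bound \<and>
     (frob (2 ^ (M - m)) (2 ^ (N - n)) (\<lambda>i j. unvec (2 ^ (N - n)) (v \<omega>) i j - B i j))\<^sup>2 \<le> bound)"
proof -
  define p q :: nat where "p = 2 ^ (m + n)" and "q = 2 ^ (M + N - m - n)"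
  define \<tau> K where "\<tau> = \<sigma> * 2 powr (- real (M + N) / 2)" and "K = noise_const \<epsilon> * sqrt (real (p + q))"
  obtain S where S: "S \<in> sets P" "measure P S \<ge> 1 - \<epsilon>"
    and noise: "\<And>\<omega> x w. \<omega> \<in> S \<Longrightarrow> \<bar>bil p q (rearr M N m n (E \<omega>)) x w\<bar> \<le> K * vnorm p x * vnorm q w"
    using gaussian_bilinear_form_bound[OF P _ _ bil_rearr_std_normal[OF P mn normal indep] \<epsilon>]
    unfolding p_def q_def K_def by fastforce
  have "8 * (\<tau> * K) / lam \<le> bound"
    using noise_scale_le_kron_rate[OF mn] \<sigma> lam \<epsilon>
    by (auto simp: bound_def K_def \<tau>_def p_def q_def noise_const_def field_simps intro!: mult_left_mono)
  moreover have "\<bar>(spec_norm p q (rearr M N m n (Y \<omega>)) - lam) / lam\<bar> \<le> 8 * (\<tau> * K) / lam \<and>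
      (frob (2 ^ m) (2 ^ n) (\<lambda>i j. unvec (2 ^ n) (u \<omega>) i j - A i j))\<^sup>2 \<le> 8 * (\<tau> * K) / lam \<and>
      (frob (2 ^ (M - m)) (2 ^ (N - n)) (\<lambda>i j. unvec (2 ^ (N - n)) (v \<omega>) i j - B i j))\<^sup>2
        \<le> 8 * (\<tau> * K) / lam"
    if "\<omega> \<in> S" for \<omega>
  proof -
    have "\<omega> \<in> space P"
      using S(1) that sets.sets_into_space by blast
    moreover have "\<tau> \<ge> 0"
      using \<sigma> by (simp add: \<tau>_def)
    ultimately show ?thesis
      using kron_estimation_errors[OF mn lam _ A B Y[of \<omega>, folded \<tau>_def]
          noise[OF that, unfolded p_def q_def] lead sign]
      unfolding p_def q_def by blast
  qed
  ultimately show ?thesis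
    using S unfolding p_def q_def by (intro bexI[OF _ S(1)]) (blast intro: order_trans)
qed

lemma bigOpI:
  assumes "\<And>\<epsilon> k. \<epsilon> > 0 \<Longrightarrow> \<exists>S\<in>sets P. measure P S \<ge> 1 - \<epsilon> \<and> (\<forall>\<omega>\<in>S. \<bar>X k \<omega>\<bar> \<le> C \<epsilon> * a k)"
  shows "bigOp P X a"
  unfolding bigOp_def using assms by blast

theorem theorem1:
  fixes P :: "'w measure"
    and M N m0 n0 :: "nat \<Rightarrow> nat"
    and lam sigma :: "nat \<Rightarrow> real"
    and A B :: "nat \<Rightarrow> rmat"
    and E :: "nat \<Rightarrow> 'w \<Rightarrow> rmat"
    and Y :: "nat \<Rightarrow> 'w \<Rightarrow> rmat"
    and lamhat :: "nat \<Rightarrow> 'w \<Rightarrow> real"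
    and u v :: "nat \<Rightarrow> 'w \<Rightarrow> rvec"
    and Ahat Bhat :: "nat \<Rightarrow> 'w \<Rightarrow> rmat"
  assumes P: "prob_space P"
    and dims: "\<And>k. m0 k \<le> M k \<and> n0 k \<le> N k"
    and lam_pos: "\<And>k. lam k > 0"
    and sigma_pos: "\<And>k. sigma k > 0"
    and A_norm: "\<And>k. frob (2 ^ m0 k) (2 ^ n0 k) (A k) = 1"
    and B_norm: "\<And>k. frob (2 ^ (M k - m0 k)) (2 ^ (N k - n0 k)) (B k) = 1"
    and MN_inf: "filterlim (\<lambda>k. M k + N k) at_top sequentially"
    and asm1a: "filterlim (\<lambda>k. real (m0 k + n0 k) / ln (ln (real (M k * N k)))) at_top sequentially"
    and asm1b: "filterlim (\<lambda>k. real ((M k - m0 k) + (N k - n0 k)) / ln (ln (real (M k * N k))))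
                  at_top sequentially"
    and E_normal: "\<And>k i j. i < 2 ^ M k \<Longrightarrow> j < 2 ^ N k \<Longrightarrow>
                  distributed P lborel (\<lambda>\<omega>. E k \<omega> i j) (\<lambda>x. ennreal (std_normal_density x))"
    and E_indep: "\<And>k. prob_space.indep_vars P (\<lambda>_. borel) (\<lambda>ij \<omega>. E k \<omega> (fst ij) (snd ij))
                  ({..<2 ^ M k} \<times> {..<2 ^ N k})"
    and Y_def: "\<And>k \<omega>. Y k \<omega> = (\<lambda>i j. lam k * kron (2 ^ (M k - m0 k)) (2 ^ (N k - n0 k)) (A k) (B k) i j
                  + sigma k * 2 powr (- real (M k + N k) / 2) * E k \<omega> i j)"
    and lamhat_def: "\<And>k \<omega>. lamhat k \<omega> = spec_norm (2 ^ (m0 k + n0 k)) (2 ^ (M k + N k - m0 k - n0 k))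
                  (rearr (M k) (N k) (m0 k) (n0 k) (Y k \<omega>))"
    and uv_lead: "\<And>k \<omega>. \<omega> \<in> space P \<Longrightarrow>
                  leading_sv_pair (2 ^ (m0 k + n0 k)) (2 ^ (M k + N k - m0 k - n0 k))
                    (rearr (M k) (N k) (m0 k) (n0 k) (Y k \<omega>)) (u k \<omega>) (v k \<omega>)"
    and uv_sign: "\<And>k \<omega>. \<omega> \<in> space P \<Longrightarrow>
                  vinner (2 ^ (m0 k + n0 k)) (u k \<omega>) (vec (2 ^ n0 k) (A k)) \<ge> 0"
    and Ahat_def: "\<And>k \<omega>. Ahat k \<omega> = unvec (2 ^ n0 k) (u k \<omega>)"
    and Bhat_def: "\<And>k \<omega>. Bhat k \<omega> = unvec (2 ^ (N k - n0 k)) (v k \<omega>)"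
  defines "r0 \<equiv> \<lambda>k. 2 powr (- real (m0 k + n0 k) / 2)
                     + 2 powr (- real ((M k - m0 k) + (N k - n0 k)) / 2)"
  shows "bigOp P (\<lambda>k \<omega>. (lamhat k \<omega> - lam k) / lam k) (\<lambda>k. r0 k / (lam k / sigma k)) \<and>
         bigOp P (\<lambda>k \<omega>. (frob (2 ^ m0 k) (2 ^ n0 k) (\<lambda>i j. Ahat k \<omega> i j - A k i j))\<^sup>2)
           (\<lambda>k. r0 k / (lam k / sigma k)) \<and>
         bigOp P (\<lambda>k \<omega>. (frob (2 ^ (M k - m0 k)) (2 ^ (N k - n0 k)) (\<lambda>i j. Bhat k \<omega> i j - B k i j))\<^sup>2)
           (\<lambda>k. r0 k / (lam k / sigma k))"
proof -
  have rate: "r0 k / (lam k / sigma k) = sigma k * kron_rate (M k) (N k) (m0 k) (n0 k) / lam k" for k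
    by (simp add: r0_def kron_rate_def)
  have "\<exists>S\<in>sets P. measure P S \<ge> 1 - \<epsilon> \<and> (\<forall>\<omega>\<in>S.
      \<bar>(lamhat k \<omega> - lam k) / lam k\<bar> \<le> 8 * noise_const \<epsilon> * (r0 k / (lam k / sigma k)) \<and>
      \<bar>(frob (2 ^ m0 k) (2 ^ n0 k) (\<lambda>i j. Ahat k \<omega> i j - A k i j))\<^sup>2\<bar>
        \<le> 8 * noise_const \<epsilon> * (r0 k / (lam k / sigma k)) \<and>
      \<bar>(frob (2 ^ (M k - m0 k)) (2 ^ (N k - n0 k)) (\<lambda>i j. Bhat k \<omega> i j - B k i j))\<^sup>2\<bar>
        \<le> 8 * noise_const \<epsilon> * (r0 k / (lam k / sigma k)))"
    if "\<epsilon> > 0" for \<epsilon> k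
    using kron_estimation_error_event[OF P conjunct1[OF dims] conjunct2[OF dims] lam_pos sigma_pos
        A_norm B_norm E_normal E_indep Y_def uv_lead uv_sign that]
    unfolding rate lamhat_def Ahat_def Bhat_def abs_power2 .
  then show ?thesis
    by (intro conjI bigOpI[where C = "\<lambda>\<epsilon>. 8 * noise_const \<epsilon>"]) (meson+)
qed

end
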